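(* Let $m\ge2$ be an integer, $\theta=1-1/m$, $\theta<\mu<1$, and let $Z$ be distributed as $\theta-B$ where $B$ is Bernoulli with mean $\mu$. Let $\gamma>0$ be the Lundberg coefficient of $Z$, i.e. the positive solution of $\mathbb{E}[\exp(\gamma Z)]=1$. Then $$\frac{m}{m-1}\log\Bigl(\frac{\mu}{(1-\mu)(m-1)}\Bigr)\le\gamma\le\frac{2m}{m-1}\log\Bigl(\frac{\mu}{(1-\mu)(m-1)}\Bigr).$$ *)

theory Defs
  imports "HOL-Probability.Probability"
begin

text \<open>Z = theta - B with B ~ Bernoulli(mu), realised on bernoulli_pmf mu (True = 1).\<close>
definition Zvar :: "real \<Rightarrow> bool \<Rightarrow> real" where
  "Zvar theta b = theta - (if b then 1 else 0)"

end

theory Submission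
  imports Defs
begin

text \<open>
  With \<open>u = exp (\<gamma> / m)\<close> and \<open>n = m - 1\<close>, the Lundberg equation reads
  \<open>\<mu> / u + (1 - \<mu>) * u ^ n = 1\<close>. Multiplied by \<open>x\<close>, the function
  \<open>\<mu> / x + (1 - \<mu>) * x ^ n - 1\<close> factors as \<open>(x - 1) * ((1 - \<mu>) * (1 + x + \<dots> + x ^ n) - 1)\<close>,
  and the second factor is strictly increasing on \<open>x \<ge> 0\<close>. Hence for \<open>x > 1\<close> the value at \<open>x\<close>
  is \<open>\<le> 1\<close> exactly when \<open>x \<le> u\<close>, and the bounds on \<open>\<gamma>\<close> reduce to evaluating this function
  at \<open>x = root n R\<close> and \<open>x = root n (R\<^sup>2)\<close>, where \<open>R = \<mu> / ((1 - \<mu>) * n) > 1\<close>.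
  At the first point Bernoulli's inequality gives a value \<open>\<le> 1\<close>; at the second,
  \<open>exp (- t) \<ge> 1 - t\<close> together with \<open>ln R \<le> (R - 1 / R) / 2\<close> gives a value \<open>\<ge> 1\<close>.
\<close>

lemma sum_powers_strict_mono_on:
  assumes "2 \<le> n"
  shows "strict_mono_on {0::real..} (\<lambda>x. \<Sum>i<n. x ^ i)"
proof (rule strict_mono_onI)
  fix x y :: real
  assume "x \<in> {0..}" "x < y"
  then have "0 \<le> x" by simp
  have split_off_linear: "(\<Sum>i<n. z ^ i) = (\<Sum>i\<in>{..<n} - {1}. z ^ i) + z" for z :: real
    using assms by (subst sum.remove[of _ 1]) auto
  have "(\<Sum>i\<in>{..<n} - {1}. x ^ i) \<le> (\<Sum>i\<in>{..<n} - {1}. y ^ i)"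
    using \<open>0 \<le> x\<close> \<open>x < y\<close> by (intro sum_mono power_mono) auto
  with \<open>x < y\<close> show "(\<Sum>i<n. x ^ i) < (\<Sum>i<n. y ^ i)"
    by (simp only: split_off_linear)
qed

lemma lundberg_factorization:
  fixes x \<mu> :: real
  assumes "x \<noteq> 0"
  shows "x * (\<mu> / x + (1 - \<mu>) * x ^ n - 1) = (x - 1) * ((1 - \<mu>) * (\<Sum>i<Suc n. x ^ i) - 1)"
proof -
  have "(x - 1) * ((1 - \<mu>) * (\<Sum>i<Suc n. x ^ i) - 1) = (1 - \<mu>) * (x ^ Suc n - 1) - x + 1"
    by (simp only: power_diff_1_eq[of x "Suc n"]) (simp add: algebra_simps)
  with assms show ?thesis
    by (simp add: algebra_simps)
qed

lemma lundberg_root_compare: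
  fixes \<mu> u x :: real
  assumes "\<mu> < 1" "1 \<le> n" "1 < u" "\<mu> / u + (1 - \<mu>) * u ^ n = 1" "1 < x"
  shows "\<mu> / x + (1 - \<mu>) * x ^ n \<le> 1 \<longleftrightarrow> x \<le> u"
    and "1 \<le> \<mu> / x + (1 - \<mu>) * x ^ n \<longleftrightarrow> u \<le> x"
proof -
  define S where "S z = (1 - \<mu>) * (\<Sum>i<Suc n. z ^ i)" for z :: real
  have "strict_mono_on {0..} S"
    unfolding S_def using assms(1,2) sum_powers_strict_mono_on[of "Suc n"]
    by (auto simp: strict_mono_on_def)
  then have S_le_iff: "S z \<le> S w \<longleftrightarrow> z \<le> w" if "0 \<le> z" "0 \<le> w" for z w
    using that by (simp add: strict_mono_on_less_eq)
  have sign: "\<mu> / z + (1 - \<mu>) * z ^ n - 1 = (z - 1) / z * (S z - 1)" if "0 < z" for z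
  proof -
    have "z * (\<mu> / z + (1 - \<mu>) * z ^ n - 1) = (z - 1) * (S z - 1)"
      unfolding S_def using that by (intro lundberg_factorization) simp
    with that show ?thesis
      by (metis nonzero_mult_div_cancel_left less_irrefl times_divide_eq_left)
  qed
  have "S u = 1"
    using sign[of u] assms(3,4) by simp
  have pos: "0 < (x - 1) / x"
    using assms(5) by simp
  have sign_x: "\<mu> / x + (1 - \<mu>) * x ^ n - 1 = (x - 1) / x * (S x - 1)"
    using sign assms(5) by simp
  have "\<mu> / x + (1 - \<mu>) * x ^ n \<le> 1 \<longleftrightarrow> S x \<le> S u"
    using sign_x \<open>S u = 1\<close> mult_pos_pos[OF pos, of "S x - 1"]
      mult_nonneg_nonpos[OF less_imp_le[OF pos], of "S x - 1"]
    by linarith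
  also have "\<dots> \<longleftrightarrow> x \<le> u"
    using S_le_iff assms(3,5) by simp
  finally show "\<mu> / x + (1 - \<mu>) * x ^ n \<le> 1 \<longleftrightarrow> x \<le> u" .
  have "1 \<le> \<mu> / x + (1 - \<mu>) * x ^ n \<longleftrightarrow> S u \<le> S x"
    using sign_x \<open>S u = 1\<close> mult_pos_neg[OF pos, of "S x - 1"]
      mult_nonneg_nonneg[OF less_imp_le[OF pos], of "S x - 1"]
    by linarith
  also have "\<dots> \<longleftrightarrow> u \<le> x"
    using S_le_iff assms(3,5) by simp
  finally show "1 \<le> \<mu> / x + (1 - \<mu>) * x ^ n \<longleftrightarrow> u \<le> x" .
qed

lemma ln_le_half_diff_inverse:
  fixes x :: real
  assumes "1 \<le> x"
  shows "ln x \<le> (x - 1 / x) / 2"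
proof -
  define g where "g t = (t - 1 / t) / 2 - ln t" for t :: real
  have "g 1 \<le> g x"
  proof (rule DERIV_nonneg_imp_nondecreasing[OF assms])
    fix t :: real
    assume "1 \<le> t" "t \<le> x"
    have "(g has_real_derivative (t - 1)\<^sup>2 / (2 * t\<^sup>2)) (at t)"
      unfolding g_def using \<open>1 \<le> t\<close>
      by (auto intro!: derivative_eq_intros simp: field_simps power2_eq_square)
    then show "\<exists>y. (g has_real_derivative y) (at t) \<and> 0 \<le> y"
      by auto
  qed
  then show ?thesis
    by (simp add: g_def)
qed

lemma lundberg_at_root_le_one:
  fixes \<mu> R :: real
  assumes "0 < \<mu>" "\<mu> < 1" "1 \<le> n" "R = \<mu> / ((1 - \<mu>) * n)"
  shows "\<mu> / root n R + (1 - \<mu>) * root n R ^ n \<le> 1"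
proof -
  have "0 < R"
    using assms by simp
  define v where "v = 1 / root n R"
  have "0 \<le> v" "v ^ n = 1 / R"
    using \<open>0 < R\<close> assms(3) by (simp_all add: v_def power_divide)
  then have "1 + n * (v - 1) \<le> 1 / R"
    using Bernoulli_inequality[of "v - 1" n] by simp
  then have "n * v \<le> 1 / R + n - 1"
    by (simp add: algebra_simps)
  then have "\<mu> * (n * v) \<le> \<mu> * (1 / R + n - 1)"
    using assms(1) by simp
  also have "\<dots> = \<mu> / R + \<mu> * n - \<mu>"
    by (simp add: algebra_simps)
  also have "\<dots> = n - \<mu>"
    unfolding assms(4) using assms(1-3) by (simp add: field_simps)
  also have "\<dots> = n * (1 - (1 - \<mu>) * R)"
    using assms by (simp add: right_diff_distrib)
  finally have "\<mu> * v \<le> 1 - (1 - \<mu>) * R"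
    using assms(3) by (simp add: mult.left_commute)
  then show ?thesis
    using \<open>0 < R\<close> assms(3) by (simp add: v_def)
qed

lemma lundberg_at_root_square_ge_one:
  fixes \<mu> R :: real
  assumes "0 < \<mu>" "\<mu> < 1" "1 \<le> n" "R = \<mu> / ((1 - \<mu>) * n)" "1 \<le> R"
  shows "1 \<le> \<mu> / root n (R\<^sup>2) + (1 - \<mu>) * root n (R\<^sup>2) ^ n"
proof -
  have ln_bound: "2 * R * ln R \<le> R\<^sup>2 - 1"
    using ln_le_half_diff_inverse[OF assms(5)] assms(5)
    by (simp add: field_simps power2_eq_square)
  have "1 / root n (R\<^sup>2) = exp (- ln (root n (R\<^sup>2)))"
    using assms(3,5) by (simp add: exp_minus inverse_eq_divide)
  also have "\<dots> = exp (- (2 * ln R / n))"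
    using assms(3,5) by (simp add: ln_root ln_realpow)
  finally have "1 / root n (R\<^sup>2) = exp (- (2 * ln R / n))" .
  then have "1 - 2 * ln R / n \<le> 1 / root n (R\<^sup>2)"
    using exp_ge_add_one_self[of "- (2 * ln R / n)"] by simp
  then have "\<mu> * (1 - 2 * ln R / n) \<le> \<mu> / root n (R\<^sup>2)"
    using mult_left_mono[OF _ less_imp_le[OF assms(1)]] by fastforce
  moreover have "\<mu> * (2 * ln R / n) = (1 - \<mu>) * (2 * R * ln R)"
    unfolding assms(4) using assms(1-3) by (simp add: field_simps)
  moreover have "(1 - \<mu>) * (2 * R * ln R) \<le> (1 - \<mu>) * (R\<^sup>2 - 1)"
    using assms(2) mult_left_mono[OF ln_bound, of "1 - \<mu>"] by simp
  ultimately show ?thesis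
    using assms(3,5) by (simp add: algebra_simps)
qed

lemma lundberg_root_ln_bounds:
  fixes \<mu> R u :: real
  assumes "0 < \<mu>" "\<mu> < 1" "1 \<le> n" "R = \<mu> / ((1 - \<mu>) * n)" "1 < R"
    and "1 < u" "\<mu> / u + (1 - \<mu>) * u ^ n = 1"
  shows "ln R / n \<le> ln u" and "ln u \<le> 2 * ln R / n"
proof -
  have "0 < n"
    using assms(3) by simp
  have "1 < root n R"
    using \<open>0 < n\<close> assms(5) by simp
  then have "root n R \<le> u"
    using lundberg_at_root_le_one[OF assms(1-4)]
    by (simp only: lundberg_root_compare(1)[OF assms(2,3,6,7)])
  then have "ln (root n R) \<le> ln u"
    using \<open>1 < root n R\<close> by simp
  then show "ln R / n \<le> ln u"
    using assms(3) by (simp add: ln_root)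
  have "1 < root n (R\<^sup>2)"
    using \<open>0 < n\<close> assms(5) by (simp add: one_less_power)
  then have "u \<le> root n (R\<^sup>2)"
    using lundberg_at_root_square_ge_one[OF assms(1-4)] assms(5)
    by (simp only: lundberg_root_compare(2)[OF assms(2,3,6,7)])
  then have "ln u \<le> ln (root n (R\<^sup>2))"
    using assms(6) by simp
  then show "ln u \<le> 2 * ln R / n"
    using assms(3,5) by (simp add: ln_root ln_realpow)
qed

lemma expectation_exp_Zvar:
  fixes \<mu> \<theta> \<gamma> :: real
  assumes "0 \<le> \<mu>" "\<mu> \<le> 1" "1 \<le> m" "\<theta> = 1 - 1 / real m"
  shows "measure_pmf.expectation (bernoulli_pmf \<mu>) (\<lambda>b. exp (\<gamma> * Zvar \<theta> b))
           = \<mu> / exp (\<gamma> / m) + (1 - \<mu>) * exp (\<gamma> / m) ^ (m - 1)"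
proof -
  have "exp (\<gamma> * Zvar \<theta> True) = 1 / exp (\<gamma> / m)"
    using assms(4) by (simp add: Zvar_def exp_minus inverse_eq_divide)
  moreover have "\<theta> = real (m - 1) / m"
    using assms(3,4) by (simp add: of_nat_diff field_simps)
  then have "\<gamma> * Zvar \<theta> False = real (m - 1) * (\<gamma> / m)"
    by (simp add: Zvar_def)
  then have "exp (\<gamma> * Zvar \<theta> False) = exp (\<gamma> / m) ^ (m - 1)"
    by (simp only: exp_of_nat_mult)
  ultimately show ?thesis
    using assms(1,2) by simp
qed

lemma lundberg_ratio_gt_one:
  fixes m :: nat and \<mu> :: real
  assumes "2 \<le> m" "1 - 1 / real m < \<mu>" "\<mu> < 1"
  shows "1 < \<mu> / ((1 - \<mu>) * (real m - 1))"
proof -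
  have "(1 - 1 / real m) * m < \<mu> * m"
    using assms(1,2) by simp
  then have "real m - 1 < \<mu> * m"
    using assms(1) by (simp add: left_diff_distrib)
  then have "(1 - \<mu>) * (real m - 1) < \<mu>"
    by (simp add: algebra_simps)
  with assms(1,3) show ?thesis
    by simp
qed

theorem lemma5:
  fixes m :: nat and \<mu> \<theta> \<gamma> :: real
  assumes "m \<ge> 2"
    and "\<theta> = 1 - 1 / real m"
    and "\<theta> < \<mu>" and "\<mu> < 1"
    and "\<gamma> > 0"
    and "measure_pmf.expectation (bernoulli_pmf \<mu>) (\<lambda>b. exp (\<gamma> * Zvar \<theta> b)) = 1"
  shows "real m / (real m - 1) * ln (\<mu> / ((1 - \<mu>) * (real m - 1))) \<le> \<gamma> \<and>
         \<gamma> \<le> 2 * real m / (real m - 1) * ln (\<mu> / ((1 - \<mu>) * (real m - 1)))"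
proof -
  define R where "R = \<mu> / ((1 - \<mu>) * (real m - 1))"
  have n: "real (m - 1) = real m - 1" "1 \<le> m - 1"
    using assms(1) by (simp_all add: of_nat_diff)
  have "0 \<le> \<theta>"
    using assms(1,2) by simp
  then have "0 < \<mu>"
    using assms(3) by linarith
  have "1 < R"
    unfolding R_def using lundberg_ratio_gt_one[OF assms(1) _ assms(4)] assms(2,3) by simp
  have "\<mu> / exp (\<gamma> / m) + (1 - \<mu>) * exp (\<gamma> / m) ^ (m - 1) = 1"
    using expectation_exp_Zvar[of \<mu> m \<theta> \<gamma>] assms(1,2,4,6) \<open>0 < \<mu>\<close> by simp
  moreover have "R = \<mu> / ((1 - \<mu>) * real (m - 1))" "1 < exp (\<gamma> / m)"
    using assms(1,5) n(1) by (simp_all add: R_def)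
  ultimately have "ln R / (real m - 1) \<le> \<gamma> / m" "\<gamma> / m \<le> 2 * ln R / (real m - 1)"
    using lundberg_root_ln_bounds[OF \<open>0 < \<mu>\<close> assms(4) n(2) _ \<open>1 < R\<close>, of "exp (\<gamma> / m)"] n(1)
    by simp_all
  moreover have "0 < real m - 1"
    using assms(1) by simp
  ultimately show ?thesis
    unfolding R_def[symmetric] by (simp add: field_simps)
qed

end
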